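(* For every integer $n\ge 2$ and every integer $k\ge 3$, $\chi_i(S_{C_k}^n)=3$, where $C_k$ is the cycle on $k$ vertices.
   Context: For a graph $H$, an injective $k$-coloring is a map $f:V(H)\to\{1,\dots,k\}$ such that any two distinct vertices $u,w$ with $f(u)=f(w)$ have no common neighbor; $\chi_i(H)$ is the least such $k$. For a graph $G$ and positive integer $n$, the generalized Sierpiński graph $S_G^n$ has vertex set $V(G)^n$, and $(u_1,\dots,u_n)$, $(v_1,\dots,v_n)$ are adjacent if and only if there is $d\in\{1,\dots,n\}$ with $u_i=v_i$ for $i<d$, $u_dv_d\in E(G)$, and $u_i=v_d$, $v_i=u_d$ for all $i>d$. *)

theory Defs
  imports Main
begin

(* A graph is given by a vertex set V and a symmetric irreflexive adjacency relation E. *)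

definition injective_coloring ::
  "'v set \<Rightarrow> ('v \<Rightarrow> 'v \<Rightarrow> bool) \<Rightarrow> nat \<Rightarrow> ('v \<Rightarrow> nat) \<Rightarrow> bool" where
  "injective_coloring V E k f \<longleftrightarrow>
     (\<forall>v\<in>V. f v \<in> {1..k}) \<and>
     (\<forall>u\<in>V. \<forall>w\<in>V. u \<noteq> w \<and> f u = f w \<longrightarrow> \<not> (\<exists>x\<in>V. E x u \<and> E x w))"

definition injective_chromatic_number :: "'v set \<Rightarrow> ('v \<Rightarrow> 'v \<Rightarrow> bool) \<Rightarrow> nat" where
  "injective_chromatic_number V E = (LEAST k. \<exists>f. injective_coloring V E k f)"

definition cycle_verts :: "nat \<Rightarrow> nat set" where
  "cycle_verts k = {0..<k}"

definition cycle_adj :: "nat \<Rightarrow> nat \<Rightarrow> nat \<Rightarrow> bool" where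
  "cycle_adj k i j \<longleftrightarrow> i \<in> {0..<k} \<and> j \<in> {0..<k} \<and> i \<noteq> j \<and>
      (j = (i + 1) mod k \<or> i = (j + 1) mod k)"

(* Generalized Sierpinski graph S_G^n: vertices are words of length n over V(G);
   positions 1..n of the paper correspond to list indices 0..n-1. *)
definition sierpinski_verts :: "'a set \<Rightarrow> nat \<Rightarrow> 'a list set" where
  "sierpinski_verts V n = {u. length u = n \<and> set u \<subseteq> V}"

definition sierpinski_adj :: "('a \<Rightarrow> 'a \<Rightarrow> bool) \<Rightarrow> nat \<Rightarrow> 'a list \<Rightarrow> 'a list \<Rightarrow> bool" where
  "sierpinski_adj E n u v \<longleftrightarrow> length u = n \<and> length v = n \<and>
     (\<exists>d<n. (\<forall>i<d. u ! i = v ! i) \<and> E (u ! d) (v ! d) \<and>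
            (\<forall>i. d < i \<and> i < n \<longrightarrow> u ! i = v ! d \<and> v ! i = u ! d))"

end

theory Submission
  imports Defs
begin

(* Two distinct vertices x, y of S_G^n with a common neighbor z agree up to some position, and for
   irreflexive G only two configurations occur: x = w c and y = w c' with c, c' distinct neighbors
   of one letter b (then z = w b), or {x, y} = {P b a^j, P a b^(j-1) c} with edges ab, bc of G and
   j >= 1 (then z = P a b^j). A coloring is injective iff it separates these pairs. The word
   0 1^(n-1) has the three neighbors 1 0^(n-1), 0 1^(n-2) 0 and 0 1^(n-2) 2, so three colors are
   needed. For k >= 4 three colors suffice using only the last two letters of a word (through
   their offset on the cycle for k >= 5, through a table for k = 4). For k = 3 no such coloring
   exists; instead the word is folded from the right with the idempotent quasigroup x o y = -x - y
   on Z/3, whose cancellation law makes the color of P v depend injectively on that of v. *)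

lemma list_eq_take_nth_replicate:
  assumes "length u = d + 1 + j" "\<forall>i. d < i \<and> i < length u \<longrightarrow> u ! i = b"
  shows "u = take d u @ u ! d # replicate j b"
proof -
  have "u = take d u @ u ! d # drop (Suc d) u"
    using assms(1) by (simp add: id_take_nth_drop)
  moreover have "drop (Suc d) u = replicate j b"
    using assms by (intro replicate_eqI) (auto simp: in_set_conv_nth)
  ultimately show ?thesis by simp
qed

lemma sierpinski_adj_iff:
  "sierpinski_adj G n u v \<longleftrightarrow>
     (\<exists>P a b j. length P + 1 + j = n \<and> G a b \<and> u = P @ a # replicate j b \<and> v = P @ b # replicate j a)"
  (is "_ \<longleftrightarrow> ?rhs")
proof
  assume "sierpinski_adj G n u v"
  then obtain d where len: "length u = n" "length v = n" and d: "d < n" "\<forall>i<d. u ! i = v ! i"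
    "G (u ! d) (v ! d)" "\<forall>i. d < i \<and> i < n \<longrightarrow> u ! i = v ! d \<and> v ! i = u ! d"
    unfolding sierpinski_adj_def by blast
  have "u = take d u @ u ! d # replicate (n - 1 - d) (v ! d)"
    using len d by (intro list_eq_take_nth_replicate) auto
  moreover have "v = take d v @ v ! d # replicate (n - 1 - d) (u ! d)"
    using len d by (intro list_eq_take_nth_replicate) auto
  moreover have "take d v = take d u"
    using len d by (intro nth_take_lemma) auto
  ultimately show ?rhs
    using len d by (intro exI[of _ "take d u"] exI[of _ "u ! d"] exI[of _ "v ! d"] exI[of _ "n - 1 - d"]) auto
next
  assume ?rhs
  then obtain P a b j where "length P + 1 + j = n" "G a b" "u = P @ a # replicate j b" "v = P @ b # replicate j a"
    by blast
  then show "sierpinski_adj G n u v"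
    unfolding sierpinski_adj_def by (intro conjI exI[of _ "length P"]) (auto simp: nth_append nth_Cons')
qed

lemma sierpinski_adjI:
  "length P + 1 + j = n \<Longrightarrow> G a b \<Longrightarrow> sierpinski_adj G n (P @ a # replicate j b) (P @ b # replicate j a)"
  unfolding sierpinski_adj_iff by blast

lemma sierpinski_common_neighbor_cases:
  assumes "irreflp G" "G a b" "G a' b'" "i \<le> j"
    and z: "P @ a # replicate j b = Q @ a' # replicate i b'"
    and "P @ b # replicate j a \<noteq> Q @ b' # replicate i a'"
  shows "i = 0 \<and> j = 0 \<and> Q = P \<and> a' = a \<or> i = 0 \<and> j \<ge> 1 \<and> Q = P @ a # replicate (j - 1) b \<and> a' = b"
proof (cases "i = j")
  case True
  then have "P = Q" "a = a'" "replicate j b = replicate j b'"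
    using z by (simp_all add: append_eq_append_conv)
  with assms(6) True have "j = 0" by (cases j) auto
  with True \<open>P = Q\<close> \<open>a = a'\<close> show ?thesis by simp
next
  case False
  with \<open>i \<le> j\<close> have "j = (j - i - 1) + Suc i" by simp
  then have "replicate j b = replicate (j - i - 1) b @ b # replicate i b"
    by (metis replicate_Suc replicate_add)
  with z have "(P @ a # replicate (j - i - 1) b) @ b # replicate i b = Q @ a' # replicate i b'"
    by simp
  then have "P @ a # replicate (j - i - 1) b = Q \<and> b # replicate i b = a' # replicate i b'"
    by (metis append_eq_append_conv length_Cons length_replicate)
  then have Q: "Q = P @ a # replicate (j - i - 1) b" and "a' = b" "replicate i b = replicate i b'"
    by auto
  moreover have "i = 0"
  proof (rule ccontr)
    assume "i \<noteq> 0"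
    then have "b' = a'" using \<open>a' = b\<close> \<open>replicate i b = replicate i b'\<close> by (cases i) auto
    then show False using \<open>G a' b'\<close> \<open>irreflp G\<close> by (simp add: irreflpD)
  qed
  ultimately show ?thesis using False by simp
qed

lemma injective_coloring_sierpinskiI:
  assumes "irreflp G"
    and range: "\<And>u. u \<in> sierpinski_verts L n \<Longrightarrow> f u \<in> {1..m}"
    and last_letter: "\<And>w b c c'. set w \<subseteq> L \<Longrightarrow> length w + 1 = n \<Longrightarrow> G b c \<Longrightarrow> G b c' \<Longrightarrow> c \<noteq> c'
        \<Longrightarrow> f (w @ [c]) \<noteq> f (w @ [c'])"
    and shift: "\<And>P a b c j. set P \<subseteq> L \<Longrightarrow> length P + 1 + j = n \<Longrightarrow> j \<ge> 1 \<Longrightarrow> G a b \<Longrightarrow> G b c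
        \<Longrightarrow> f (P @ b # replicate j a) \<noteq> f (P @ a # replicate (j - 1) b @ [c])"
  shows "injective_coloring (sierpinski_verts L n) (sierpinski_adj G n) m f"
  unfolding injective_coloring_def
proof (intro conjI ballI impI notI)
  fix u assume "u \<in> sierpinski_verts L n"
  then show "f u \<in> {1..m}" by (rule range)
next
  fix x y assume "x \<in> sierpinski_verts L n" "y \<in> sierpinski_verts L n" and xy: "x \<noteq> y \<and> f x = f y"
    and "\<exists>z\<in>sierpinski_verts L n. sierpinski_adj G n z x \<and> sierpinski_adj G n z y"
  then obtain z where z: "set z \<subseteq> L" "length z = n" and "sierpinski_adj G n z x" "sierpinski_adj G n z y"
    by (auto simp: sierpinski_verts_def)
  then obtain P a b j Q a' b' i where "G a b" "z = P @ a # replicate j b" "x = P @ b # replicate j a"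
    and "G a' b'" "z = Q @ a' # replicate i b'" "y = Q @ b' # replicate i a'"
    unfolding sierpinski_adj_iff by blast
  moreover have "f x \<noteq> f y"
    if "G a b" "z = P @ a # replicate j b" "x = P @ b # replicate j a"
      and "G a' b'" "z = Q @ a' # replicate i b'" "y = Q @ b' # replicate i a'"
      and "i \<le> j" "x \<noteq> y"
    for x y P a b j Q a' b' i
  proof -
    have "i = 0 \<and> j = 0 \<and> Q = P \<and> a' = a \<or> i = 0 \<and> j \<ge> 1 \<and> Q = P @ a # replicate (j - 1) b \<and> a' = b"
      using that by (intro sierpinski_common_neighbor_cases[OF \<open>irreflp G\<close> that(1,4,7)]) auto
    then show ?thesis
    proof (elim disjE conjE)
      assume "i = 0" "j = 0" "Q = P" "a' = a"
      with that z have "f (P @ [b]) \<noteq> f (P @ [b'])"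
        by (intro last_letter[of P a]) auto
      with that \<open>j = 0\<close> \<open>i = 0\<close> \<open>Q = P\<close> show ?thesis by simp
    next
      assume "i = 0" "1 \<le> j" "Q = P @ a # replicate (j - 1) b" "a' = b"
      with that z have "f (P @ b # replicate j a) \<noteq> f (P @ a # replicate (j - 1) b @ [b'])"
        by (intro shift) auto
      with that \<open>i = 0\<close> \<open>Q = P @ a # replicate (j - 1) b\<close> show ?thesis by simp
    qed
  qed
  ultimately show False
    using xy by (metis nat_le_linear)
qed

lemma injective_coloring_card_neighbors_le:
  assumes f: "injective_coloring V E m f" and "z \<in> V" "A \<subseteq> V" "\<And>v. v \<in> A \<Longrightarrow> E z v"
  shows "card A \<le> m"
proof -
  have "inj_on f A"
    using assms unfolding injective_coloring_def inj_on_def by blast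
  moreover have "f ` A \<subseteq> {1..m}"
    using f \<open>A \<subseteq> V\<close> unfolding injective_coloring_def by blast
  ultimately show ?thesis
    using card_inj_on_le[of f A "{1..m}"] by simp
qed

lemma three_le_injective_coloring_sierpinski:
  assumes f: "injective_coloring (sierpinski_verts L n) (sierpinski_adj G n) m f"
    and "n \<ge> 2" "G a b" "G b a" "G b c" "a \<noteq> b" "a \<noteq> c" "a \<in> L" "b \<in> L" "c \<in> L"
  shows "3 \<le> m"
proof -
  obtain p where n: "n = p + 2" using \<open>n \<ge> 2\<close> by (metis le_add_diff_inverse2)
  define P where "P = a # replicate p b"
  have z: "P @ [b] = a # replicate (p + 1) b"
    by (simp add: P_def replicate_append_same)
  let ?N = "{b # replicate (p + 1) a, P @ [a], P @ [c]}"
  have "card ?N = 3"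
    using \<open>a \<noteq> b\<close> \<open>a \<noteq> c\<close> by (simp add: P_def)
  moreover have "card ?N \<le> m"
  proof (rule injective_coloring_card_neighbors_le[OF f])
    show "P @ [b] \<in> sierpinski_verts L n" "?N \<subseteq> sierpinski_verts L n"
      using assms n by (auto simp: P_def sierpinski_verts_def)
    have "sierpinski_adj G n (P @ [b]) (P @ [a])" "sierpinski_adj G n (P @ [b]) (P @ [c])"
      using sierpinski_adjI[of P 0 n G] n assms(4,5) by (simp_all add: P_def)
    moreover have "sierpinski_adj G n (P @ [b]) (b # replicate (p + 1) a)"
      using sierpinski_adjI[of "[]" "p + 1" n G a b] n assms(3) by (simp add: z)
    ultimately show "sierpinski_adj G n (P @ [b]) v" if "v \<in> ?N" for v
      using that by blast
  qed
  ultimately show ?thesis by simp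
qed

lemma injective_coloring_sierpinski_last_two_letters:
  assumes "irreflp G" "n \<ge> 2"
    and range: "\<And>e x. e \<in> L \<Longrightarrow> x \<in> L \<Longrightarrow> h e x < 3"
    and last_letter: "\<And>e b c c'. e \<in> L \<Longrightarrow> G b c \<Longrightarrow> G b c' \<Longrightarrow> c \<noteq> c' \<Longrightarrow> h e c \<noteq> h e c'"
    and shift_once: "\<And>a b c. G a b \<Longrightarrow> G b c \<Longrightarrow> h b a \<noteq> h a c"
    and shift_more: "\<And>a b c. G a b \<Longrightarrow> G b c \<Longrightarrow> h a a \<noteq> h b c"
  shows "injective_coloring (sierpinski_verts L n) (sierpinski_adj G n) 3
           (\<lambda>u. h (u ! (n - 2)) (u ! (n - 1)) + 1)"
proof (rule injective_coloring_sierpinskiI[OF \<open>irreflp G\<close>])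
  fix u assume "u \<in> sierpinski_verts L n"
  then have "u ! (n - 2) \<in> L" "u ! (n - 1) \<in> L"
    using \<open>n \<ge> 2\<close> by (auto simp: sierpinski_verts_def intro!: nth_mem)
  then show "h (u ! (n - 2)) (u ! (n - 1)) + 1 \<in> {1..3}"
    using range[of "u ! (n - 2)" "u ! (n - 1)"] by simp
next
  fix w b c c' assume "set w \<subseteq> L" "length w + 1 = n" "G b c" "G b c'" "c \<noteq> c'"
  moreover from this have "(w @ [x]) ! (n - 2) = w ! (n - 2)" "(w @ [x]) ! (n - 1) = x" for x
    using \<open>n \<ge> 2\<close> by (auto simp: nth_append)
  moreover have "w ! (n - 2) \<in> L"
    using calculation \<open>n \<ge> 2\<close> by (auto intro: nth_mem)
  ultimately show "h ((w @ [c]) ! (n - 2)) ((w @ [c]) ! (n - 1)) + 1 \<noteq>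
                   h ((w @ [c']) ! (n - 2)) ((w @ [c']) ! (n - 1)) + 1"
    using last_letter by simp
next
  fix P :: "'a list" and a b c and j :: nat assume len: "length P + 1 + j = n" and "j \<ge> 1" "G a b" "G b c"
  show "h ((P @ b # replicate j a) ! (n - 2)) ((P @ b # replicate j a) ! (n - 1)) + 1 \<noteq>
        h ((P @ a # replicate (j - 1) b @ [c]) ! (n - 2)) ((P @ a # replicate (j - 1) b @ [c]) ! (n - 1)) + 1"
  proof (cases "j = 1")
    case True
    then have idx: "n - 2 = length P" "n - 1 = Suc (length P)"
      using len by simp_all
    show ?thesis
      unfolding idx using True shift_once[OF \<open>G a b\<close> \<open>G b c\<close>] by (simp add: nth_append)
  next
    case False
    with \<open>j \<ge> 1\<close> have "j \<ge> 2" by simp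
    with len have idx: "n - 2 = length P + Suc (j - 2)" "n - 1 = length P + Suc (j - 1)"
      by simp_all
    have "(P @ b # replicate j a) ! (n - 2) = a" "(P @ b # replicate j a) ! (n - 1) = a"
      "(P @ a # replicate (j - 1) b @ [c]) ! (n - 2) = b" "(P @ a # replicate (j - 1) b @ [c]) ! (n - 1) = c"
      using \<open>j \<ge> 2\<close> unfolding idx by (auto simp: nth_append)
    then show ?thesis
      using shift_more[OF \<open>G a b\<close> \<open>G b c\<close>] by simp
  qed
qed

lemma irreflp_cycle_adj: "irreflp (cycle_adj k)"
  by (auto simp: cycle_adj_def intro: irreflpI)

lemma cycle_adj_less: "cycle_adj k a b \<Longrightarrow> a < k \<and> b < k"
  by (simp add: cycle_adj_def)

lemma less_3_iff: "(x::nat) < 3 \<longleftrightarrow> x = 0 \<or> x = 1 \<or> x = 2"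
  by linarith

(* On {0, 1, 2} this is the idempotent quasigroup x o y = -x - y (mod 3). *)
definition third_color :: "nat \<Rightarrow> nat \<Rightarrow> nat" where
  "third_color x y = (if x = y then x else 3 - x - y)"

lemma third_color_less: "x < 3 \<Longrightarrow> y < 3 \<Longrightarrow> third_color x y < 3"
  unfolding third_color_def by auto

lemma third_color_cancel:
  "x < 3 \<Longrightarrow> y < 3 \<Longrightarrow> y' < 3 \<Longrightarrow> third_color x y = third_color x y' \<Longrightarrow> y = y'"
  unfolding less_3_iff third_color_def by (elim disjE) simp_all

lemma third_color_third_color: "x < 3 \<Longrightarrow> y < 3 \<Longrightarrow> third_color x (third_color x y) = y"
  unfolding less_3_iff third_color_def by (elim disjE) simp_all

fun cycle3_color :: "nat list \<Rightarrow> nat" where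
  "cycle3_color [] = 0"
| "cycle3_color [x] = x"
| "cycle3_color (x # y # ys) = third_color x (cycle3_color (y # ys))"

lemma cycle3_color_Cons: "w \<noteq> [] \<Longrightarrow> cycle3_color (x # w) = third_color x (cycle3_color w)"
  by (cases w) auto

lemma cycle3_color_less: "set w \<subseteq> {0..<3} \<Longrightarrow> cycle3_color w < 3"
  by (induction w rule: cycle3_color.induct) (auto intro: third_color_less)

lemma cycle3_color_append_neq:
  assumes "set (P @ v) \<subseteq> {0..<3}" "set (P @ v') \<subseteq> {0..<3}" "v \<noteq> []" "v' \<noteq> []"
    and "cycle3_color v \<noteq> cycle3_color v'"
  shows "cycle3_color (P @ v) \<noteq> cycle3_color (P @ v')"
  using assms(1,2)
proof (induction P)
  case Nil
  show ?case using assms(5) by simp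
next
  case (Cons x P)
  then show ?case
    using assms(3,4) cycle3_color_less[of "P @ v"] cycle3_color_less[of "P @ v'"]
    by (auto simp: cycle3_color_Cons dest: third_color_cancel)
qed

lemma cycle3_color_replicate: "cycle3_color (a # replicate m a) = a"
  by (induction m) (auto simp: cycle3_color_Cons third_color_def)

lemma cycle3_color_replicate_snoc:
  "b < 3 \<Longrightarrow> c < 3 \<Longrightarrow> cycle3_color (replicate m b @ [c]) \<in> {c, third_color b c}"
  by (induction m) (auto simp: cycle3_color_Cons third_color_third_color)

lemma cycle3_color_shift_neq:
  assumes "set P \<subseteq> {0..<3}" "a < 3" "b < 3" "c < 3" "a \<noteq> b" "b \<noteq> c" "j \<ge> 1"
  shows "cycle3_color (P @ b # replicate j a) \<noteq> cycle3_color (P @ a # replicate (j - 1) b @ [c])"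
proof (rule cycle3_color_append_neq)
  obtain m where "j = Suc m" using \<open>j \<ge> 1\<close> by (cases j) auto
  then have "cycle3_color (b # replicate j a) = third_color b a"
    by (simp add: cycle3_color_Cons cycle3_color_replicate)
  moreover obtain t where "t \<in> {c, third_color b c}"
    "cycle3_color (a # replicate (j - 1) b @ [c]) = third_color a t"
    using cycle3_color_replicate_snoc[OF \<open>b < 3\<close> \<open>c < 3\<close>, of "j - 1"] by (simp add: cycle3_color_Cons)
  moreover have "third_color b a \<noteq> third_color a c" "third_color b a \<noteq> third_color a (third_color b c)"
    using assms(2-6) unfolding less_3_iff third_color_def by (elim disjE; simp)+
  ultimately show "cycle3_color (b # replicate j a) \<noteq> cycle3_color (a # replicate (j - 1) b @ [c])"
    by auto
qed (use assms in auto)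

lemma injective_coloring_sierpinski_cycle3:
  "injective_coloring (sierpinski_verts {0..<3} n) (sierpinski_adj (cycle_adj 3) n) 3
     (\<lambda>u. cycle3_color u + 1)"
proof (rule injective_coloring_sierpinskiI[OF irreflp_cycle_adj])
  show "cycle3_color u + 1 \<in> {1..3}" if "u \<in> sierpinski_verts {0..<3} n" for u
    using that cycle3_color_less[of u] by (auto simp: sierpinski_verts_def)
next
  fix w :: "nat list" and b c c' assume "set w \<subseteq> {0..<3}" "cycle_adj 3 b c" "cycle_adj 3 b c'" "c \<noteq> c'"
  then show "cycle3_color (w @ [c]) + 1 \<noteq> cycle3_color (w @ [c']) + 1"
    using cycle3_color_append_neq[of w "[c]" "[c']"] by (auto dest: cycle_adj_less)
next
  fix P :: "nat list" and a b c and j :: nat assume "set P \<subseteq> {0..<3}" "j \<ge> 1" "cycle_adj 3 a b" "cycle_adj 3 b c"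
  then show "cycle3_color (P @ b # replicate j a) + 1 \<noteq> cycle3_color (P @ a # replicate (j - 1) b @ [c]) + 1"
    using cycle3_color_shift_neq[of P a b c j] irreflp_cycle_adj[of 3]
    by (auto dest: cycle_adj_less irreflpD)
qed

definition cycle_succ :: "nat \<Rightarrow> nat \<Rightarrow> nat" where
  "cycle_succ k x = (if x + 1 = k then 0 else x + 1)"

definition cycle_pred :: "nat \<Rightarrow> nat \<Rightarrow> nat" where
  "cycle_pred k x = (if x = 0 then k - 1 else x - 1)"

definition cycle_offset :: "nat \<Rightarrow> nat \<Rightarrow> nat \<Rightarrow> nat" where
  "cycle_offset k e x = (if e \<le> x then x - e else x + k - e)"

lemma cycle_adj_iff:
  assumes "k \<ge> 3"
  shows "cycle_adj k a b \<longleftrightarrow> a < k \<and> (b = cycle_succ k a \<or> b = cycle_pred k a)"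
proof (cases "a < k \<and> b < k")
  case True
  then have "(a + 1) mod k = cycle_succ k a" "(b + 1) mod k = cycle_succ k b"
    by (auto simp: cycle_succ_def)
  then have "cycle_adj k a b \<longleftrightarrow> a \<noteq> b \<and> (b = cycle_succ k a \<or> a = cycle_succ k b)"
    using True unfolding cycle_adj_def by auto
  also have "\<dots> \<longleftrightarrow> b = cycle_succ k a \<or> b = cycle_pred k a"
    using True assms by (auto simp: cycle_succ_def cycle_pred_def)
  finally show ?thesis
    using True by simp
next
  case False
  then show ?thesis
    by (auto simp: cycle_adj_def cycle_succ_def cycle_pred_def)
qed

lemma cycle_offset_succ:
  "e < k \<Longrightarrow> x < k \<Longrightarrow> cycle_offset k e (cycle_succ k x) = cycle_succ k (cycle_offset k e x)"
  by (auto simp: cycle_offset_def cycle_succ_def)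

lemma cycle_offset_pred:
  "e < k \<Longrightarrow> x < k \<Longrightarrow> cycle_offset k e (cycle_pred k x) = cycle_pred k (cycle_offset k e x)"
  by (auto simp: cycle_offset_def cycle_pred_def)

lemma cycle_offset_less: "e < k \<Longrightarrow> x < k \<Longrightarrow> cycle_offset k e x < k"
  by (auto simp: cycle_offset_def)

lemma cycle_offset_near:
  assumes "k \<ge> 3" "x < k"
  shows "cycle_offset k x x = 0" "cycle_offset k x (cycle_succ k x) = 1" "cycle_offset k x (cycle_pred k x) = k - 1"
    "cycle_offset k x (cycle_succ k (cycle_succ k x)) = 2" "cycle_offset k x (cycle_pred k (cycle_pred k x)) = k - 2"
  using assms by (auto simp: cycle_offset_def cycle_succ_def cycle_pred_def)

lemma cycle_succ_pred: "x < k \<Longrightarrow> cycle_succ k (cycle_pred k x) = x"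
  by (auto simp: cycle_succ_def cycle_pred_def)

lemma cycle_pred_succ: "x < k \<Longrightarrow> cycle_pred k (cycle_succ k x) = x"
  by (auto simp: cycle_succ_def cycle_pred_def)

(* Offsets 1, 2, 3, 4, 5, 6, ... get colors 1, 1, 0, 0, 1, 1, ..., so offsets two apart get
   different colors; the offsets k - 2 and k - 1 get color 2. *)
definition offset_color :: "nat \<Rightarrow> nat \<Rightarrow> nat" where
  "offset_color k t =
     (if t = 0 then 0 else if k - 2 \<le> t then 2 else if even ((t - 1) div 2) then 1 else 0)"

lemma offset_color_near:
  "k \<ge> 5 \<Longrightarrow> offset_color k 0 = 0 \<and> offset_color k 1 = 1 \<and> offset_color k 2 = 1 \<and>
     offset_color k (k - 1) = 2 \<and> offset_color k (k - 2) = 2"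
  by (auto simp: offset_color_def)

lemma offset_color_succ_pred:
  assumes "k \<ge> 5" "t < k"
  shows "offset_color k (cycle_succ k t) \<noteq> offset_color k (cycle_pred k t)"
proof -
  consider "t = 0" | "t = 1" | "t \<ge> k - 3" | "2 \<le> t" "t < k - 3"
    by linarith
  then show ?thesis
  proof cases
    case 4
    then have "even ((t + 1 - 1) div 2) \<longleftrightarrow> odd ((t - 1 - 1) div 2)" by presburger
    then show ?thesis using 4 assms unfolding offset_color_def cycle_succ_def cycle_pred_def by auto
  qed (use assms in \<open>auto simp: offset_color_def cycle_succ_def cycle_pred_def\<close>)
qed

definition cycle_color :: "nat \<Rightarrow> nat \<Rightarrow> nat \<Rightarrow> nat" where
  "cycle_color k e x = offset_color k (cycle_offset k e x)"

lemma injective_coloring_sierpinski_cycle_ge5: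
  assumes "k \<ge> 5" "n \<ge> 2"
  shows "injective_coloring (sierpinski_verts {0..<k} n) (sierpinski_adj (cycle_adj k) n) 3
           (\<lambda>u. cycle_color k (u ! (n - 2)) (u ! (n - 1)) + 1)"
proof (rule injective_coloring_sierpinski_last_two_letters[OF irreflp_cycle_adj \<open>n \<ge> 2\<close>])
  have k: "k \<ge> 3" using assms by simp
  note adj = cycle_adj_iff[OF k]
  note near = cycle_offset_near[OF k] offset_color_near[OF \<open>k \<ge> 5\<close>]
  show "cycle_color k e x < 3" for e x
    by (simp add: cycle_color_def offset_color_def)
  show "cycle_color k e c \<noteq> cycle_color k e c'"
    if "e \<in> {0..<k}" "cycle_adj k b c" "cycle_adj k b c'" "c \<noteq> c'" for e b c c'
  proof -
    have "b < k" "e < k" using that adj by auto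
    then have "cycle_color k e (cycle_succ k b) \<noteq> cycle_color k e (cycle_pred k b)"
      unfolding cycle_color_def cycle_offset_succ[OF \<open>e < k\<close> \<open>b < k\<close>] cycle_offset_pred[OF \<open>e < k\<close> \<open>b < k\<close>]
      by (intro offset_color_succ_pred \<open>k \<ge> 5\<close> cycle_offset_less)
    moreover have "{c, c'} = {cycle_succ k b, cycle_pred k b}"
      using that adj by auto
    ultimately show ?thesis
      by (metis doubleton_eq_iff)
  qed
  show "cycle_color k b a \<noteq> cycle_color k a c" if "cycle_adj k a b" "cycle_adj k b c" for a b c
  proof -
    have "a < k" "b < k" using that adj by auto
    from that adj consider "b = cycle_succ k a" | "b = cycle_pred k a" by auto
    then show ?thesis
    proof cases
      case 1
      then have "a = cycle_pred k b" "c = cycle_succ k (cycle_succ k a) \<or> c = a"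
        using that adj \<open>a < k\<close> by (auto simp: cycle_pred_succ)
      then show ?thesis
        using near \<open>a < k\<close> \<open>b < k\<close> by (auto simp: cycle_color_def)
    next
      case 2
      then have "a = cycle_succ k b" "c = cycle_pred k (cycle_pred k a) \<or> c = a"
        using that adj \<open>a < k\<close> by (auto simp: cycle_succ_pred)
      then show ?thesis
        using near \<open>a < k\<close> \<open>b < k\<close> by (auto simp: cycle_color_def)
    qed
  qed
  show "cycle_color k a a \<noteq> cycle_color k b c" if "cycle_adj k a b" "cycle_adj k b c" for a b c
    using that adj near by (auto simp: cycle_color_def)
qed

lemma less_4_iff: "(x::nat) < 4 \<longleftrightarrow> x = 0 \<or> x = 1 \<or> x = 2 \<or> x = 3"
  by linarith

lemma cycle_adj_4_iff:
  "cycle_adj 4 a b \<longleftrightarrow> (a, b) \<in> {(0, 1), (1, 2), (2, 3), (3, 0), (1, 0), (2, 1), (3, 2), (0, 3)}"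
  unfolding cycle_adj_def atLeastLessThan_iff by (auto simp: less_4_iff)

(* For k = 4 no coloring depending only on the offset of x from e exists, hence a table. *)
definition cycle4_color :: "nat \<Rightarrow> nat \<Rightarrow> nat" where
  "cycle4_color e x = [[0, 0, 1, 1], [2, 2, 1, 1], [2, 0, 0, 1], [2, 0, 1, 2]] ! e ! x"

lemma injective_coloring_sierpinski_cycle4:
  assumes "n \<ge> 2"
  shows "injective_coloring (sierpinski_verts {0..<4} n) (sierpinski_adj (cycle_adj 4) n) 3
           (\<lambda>u. cycle4_color (u ! (n - 2)) (u ! (n - 1)) + 1)"
proof (rule injective_coloring_sierpinski_last_two_letters[OF irreflp_cycle_adj assms])
  show "cycle4_color e x < 3" if "e \<in> {0..<4}" "x \<in> {0..<4}" for e x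
    using that unfolding atLeastLessThan_iff less_4_iff cycle4_color_def by (elim conjE disjE) simp_all
  show "cycle4_color e c \<noteq> cycle4_color e c'"
    if "e \<in> {0..<4}" "cycle_adj 4 b c" "cycle_adj 4 b c'" "c \<noteq> c'" for e b c c'
    using that unfolding atLeastLessThan_iff less_4_iff cycle_adj_4_iff cycle4_color_def
    by (elim conjE disjE insertE; simp)
  show "cycle4_color b a \<noteq> cycle4_color a c" if "cycle_adj 4 a b" "cycle_adj 4 b c" for a b c
    using that unfolding cycle_adj_4_iff cycle4_color_def by (elim insertE; simp)
  show "cycle4_color a a \<noteq> cycle4_color b c" if "cycle_adj 4 a b" "cycle_adj 4 b c" for a b c
    using that unfolding cycle_adj_4_iff cycle4_color_def by (elim insertE; simp)
qed

theorem mainTheorem3: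
  fixes n k :: nat
  assumes "n \<ge> 2" and "k \<ge> 3"
  shows "injective_chromatic_number (sierpinski_verts (cycle_verts k) n)
           (sierpinski_adj (cycle_adj k) n) = 3"
  unfolding injective_chromatic_number_def cycle_verts_def
proof (rule Least_equality)
  consider "k = 3" | "k = 4" | "k \<ge> 5"
    using \<open>k \<ge> 3\<close> by linarith
  then show "\<exists>f. injective_coloring (sierpinski_verts {0..<k} n) (sierpinski_adj (cycle_adj k) n) 3 f"
    by cases (use injective_coloring_sierpinski_cycle3 injective_coloring_sierpinski_cycle4[OF \<open>n \<ge> 2\<close>]
        injective_coloring_sierpinski_cycle_ge5[OF _ \<open>n \<ge> 2\<close>] in blast)+
next
  fix m assume "\<exists>f. injective_coloring (sierpinski_verts {0..<k} n) (sierpinski_adj (cycle_adj k) n) m f"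
  then obtain f where "injective_coloring (sierpinski_verts {0..<k} n) (sierpinski_adj (cycle_adj k) n) m f"
    by blast
  then show "3 \<le> m"
    by (rule three_le_injective_coloring_sierpinski[where a = 0 and b = 1 and c = 2])
      (use assms in \<open>auto simp: cycle_adj_def\<close>)
qed

end
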